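(* For all $2$-admissible integers $n > 1$, any partial $2$-star design of order $n$ with $n-3$ stars is completable.
   Context: A $2$-star is a copy of $K_{1,2}$ (a path with two edges). A partial $2$-star design of order $n$ is a pair $(V,\mathcal{A})$ where $V$ is a set of $n$ vertices and $\mathcal{A}$ is a set of edge-disjoint $2$-stars that are subgraphs of the complete graph $K_V$; it is completable if there is a set $\mathcal{B}\supseteq\mathcal{A}$ of edge-disjoint $2$-stars in $K_V$ whose edges cover all edges of $K_V$. A positive integer $n$ is $2$-admissible if $\binom{n}{2}$ is even. *)

theory Defs
  imports Main
begin

definition complete_edges :: "'a set \<Rightarrow> 'a set set" where
  "complete_edges V = {e. \<exists>x y. x \<in> V \<and> y \<in> V \<and> x \<noteq> y \<and> e = {x, y}}"

definition two_star :: "'a set set \<Rightarrow> bool" where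
  "two_star S \<longleftrightarrow> (\<exists>a b c. distinct [a, b, c] \<and> S = {{c, a}, {c, b}})"

definition edge_disjoint_stars :: "'a set \<Rightarrow> 'a set set set \<Rightarrow> bool" where
  "edge_disjoint_stars V A \<longleftrightarrow>
     (\<forall>S\<in>A. two_star S \<and> S \<subseteq> complete_edges V) \<and>
     (\<forall>S\<in>A. \<forall>T\<in>A. S \<noteq> T \<longrightarrow> S \<inter> T = {})"

definition partial_2star_design :: "'a set \<Rightarrow> 'a set set set \<Rightarrow> bool" where
  "partial_2star_design V A \<longleftrightarrow> finite V \<and> edge_disjoint_stars V A"

definition completable :: "'a set \<Rightarrow> 'a set set set \<Rightarrow> bool" where
  "completable V A \<longleftrightarrow>
     (\<exists>B. A \<subseteq> B \<and> edge_disjoint_stars V B \<and> \<Union>B = complete_edges V)"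

definition two_admissible :: "nat \<Rightarrow> bool" where
  "two_admissible n \<longleftrightarrow> n > 0 \<and> even (n choose 2)"

end

theory Submission
  imports Defs "HOL-Library.Disjoint_Sets"
begin

text \<open>
  The leave \<open>G = K\<^sub>V - \<Union>A\<close> has an even number of edges, since \<open>n choose 2\<close> is even
  and the \<open>n - 3\<close> stars of \<open>A\<close> cover \<open>2(n - 3)\<close> edges. An edge cut of \<open>K\<^sub>V\<close> with at
  least two vertices on each side has at least \<open>2n - 4\<close> edges, so it cannot lie inside
  \<open>\<Union>A\<close>; hence \<open>G\<close> is connected on its non-isolated vertices. A connected graph with an
  even number of edges decomposes into 2-stars: order its vertices so that each has a
  neighbour later in the order, and pair off the edges at each vertex in turn, holding back
  the edge to a later neighbour when their number is odd.
\<close>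

definition star_packing :: "'a set set set \<Rightarrow> bool" where
  "star_packing B \<longleftrightarrow> (\<forall>S\<in>B. two_star S) \<and> disjoint B"

lemma edge_disjoint_stars_iff:
  "edge_disjoint_stars V B \<longleftrightarrow> star_packing B \<and> \<Union>B \<subseteq> complete_edges V"
  by (auto simp: edge_disjoint_stars_def star_packing_def pairwise_def disjnt_def)

lemma star_packing_empty [simp]: "star_packing {}"
  by (simp add: star_packing_def)

lemma star_packing_union:
  "star_packing B \<Longrightarrow> star_packing C \<Longrightarrow> \<Union>B \<inter> \<Union>C = {} \<Longrightarrow> star_packing (B \<union> C)"
  by (auto simp: star_packing_def intro: disjoint_union)

lemma card_two_star: "two_star S \<Longrightarrow> card S = 2"
  unfolding two_star_def by (auto simp: doubleton_eq_iff)

lemma card_Union_star_packing: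
  assumes "star_packing B" and "finite (\<Union>B)"
  shows "card (\<Union>B) = 2 * card B"
proof -
  have "card (\<Union>B) = sum card B"
    using assms by (intro card_Union_disjoint) (auto simp: star_packing_def intro: finite_subset)
  also have "\<dots> = (\<Sum>S\<in>B. 2)"
    using assms(1) by (intro sum.cong) (auto simp: star_packing_def card_two_star)
  finally show ?thesis
    using assms(2) finite_UnionD by fastforce
qed

lemma complete_edges_eq: "complete_edges V = {e. e \<subseteq> V \<and> card e = 2}"
  unfolding complete_edges_def by (auto simp: card_2_iff)

lemma finite_complete_edges: "finite V \<Longrightarrow> finite (complete_edges V)"
  unfolding complete_edges_eq by (rule finite_subset[of _ "Pow V"]) auto

lemma card_complete_edges: "finite V \<Longrightarrow> card (complete_edges V) = card V choose 2"
  unfolding complete_edges_eq by (rule n_subsets)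

lemma star_decomposition_of_even_pencil:
  assumes "finite E" and "even (card E)" and "\<And>e. e \<in> E \<Longrightarrow> \<exists>a. a \<noteq> v \<and> e = {v, a}"
  shows "\<exists>B. star_packing B \<and> \<Union>B = E"
  using assms
proof (induction "card E" arbitrary: E rule: less_induct)
  case less
  show ?case
  proof (cases "E = {}")
    case True
    then show ?thesis by (intro exI[of _ "{}"]) simp
  next
    case False
    with less.prems(1,2) have "\<not> card E \<le> Suc 0"
      by (auto simp: le_Suc_eq)
    then obtain e1 e2 where e12: "e1 \<in> E" "e2 \<in> E" "e1 \<noteq> e2"
      using card_le_Suc0_iff_eq[OF less.prems(1)] by blast
    then obtain a b where ab: "a \<noteq> v" "e1 = {v, a}" "b \<noteq> v" "e2 = {v, b}" "a \<noteq> b"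
      using less.prems(3)[OF e12(1)] less.prems(3)[OF e12(2)] by blast
    let ?S = "{e1, e2}"
    have "two_star ?S"
      unfolding two_star_def using ab by (intro exI[of _ a] exI[of _ b] exI[of _ v]) auto
    have "card (E - ?S) = card E - 2"
      using e12 less.prems(1) by (subst card_Diff_subset) auto
    then obtain B where B: "star_packing B" "\<Union>B = E - ?S"
      using less.hyps[of "E - ?S"] less.prems e12 False by (auto simp: card_gt_0_iff)
    have "star_packing ({?S} \<union> B)"
      using B \<open>two_star ?S\<close> by (intro star_packing_union) (auto simp: star_packing_def)
    moreover have "\<Union>({?S} \<union> B) = E"
      using B e12 by auto
    ultimately show ?thesis by blast
  qed
qed

fun later_adjacent :: "'a set set \<Rightarrow> 'a list \<Rightarrow> bool" where
  "later_adjacent G [] \<longleftrightarrow> True"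
| "later_adjacent G (v # vs) \<longleftrightarrow>
     (vs \<noteq> [] \<longrightarrow> (\<exists>p\<in>set vs. {v, p} \<in> G)) \<and> later_adjacent G vs"

lemma later_adjacent_mono:
  "later_adjacent G vs \<Longrightarrow>
   (\<And>x y. x \<in> set vs \<Longrightarrow> y \<in> set vs \<Longrightarrow> {x, y} \<in> G \<Longrightarrow> {x, y} \<in> G') \<Longrightarrow>
   later_adjacent G' vs"
  by (induction vs) fastforce+

lemma star_decomposition_along_later_adjacent:
  assumes "distinct vs" and "finite G" and "G \<subseteq> complete_edges V"
    and "\<forall>e\<in>G. e \<inter> set vs \<noteq> {}" and "later_adjacent G vs" and "even (card G)"
  shows "\<exists>B. star_packing B \<and> \<Union>B = G"
  using assms
proof (induction vs arbitrary: G)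
  case Nil
  then show ?case by (intro exI[of _ "{}"]) auto
next
  case (Cons v vs)
  define Gv where "Gv = {e\<in>G. v \<in> e}"
  have "finite Gv" using Cons.prems(2) by (simp add: Gv_def)
  have Gv_pencil: "\<exists>a. a \<noteq> v \<and> e = {v, a}" if "e \<in> Gv" for e
    using that Cons.prems(3) by (auto simp: Gv_def complete_edges_def)
  obtain E where E: "E \<subseteq> Gv" "even (card E)" "\<forall>e\<in>Gv - E. e \<inter> set vs \<noteq> {}"
  proof (cases "even (card Gv)")
    case True
    then show ?thesis using that[of Gv] by blast
  next
    case False
    have "G \<noteq> Gv" using False Cons.prems(6) by blast
    then have "vs \<noteq> []" using Cons.prems(4) by (auto simp: Gv_def)
    then obtain p where p: "p \<in> set vs" "{v, p} \<in> Gv" using Cons.prems(5) by (auto simp: Gv_def)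
    have "even (card (Gv - {{v, p}}))"
      using False p(2) \<open>finite Gv\<close> by (simp add: card_Diff_singleton)
    then show ?thesis using that[of "Gv - {{v, p}}"] p(1) by auto
  qed
  have "finite E" using E(1) \<open>finite Gv\<close> finite_subset by blast
  have "\<exists>a. a \<noteq> v \<and> e = {v, a}" if "e \<in> E" for e
    using Gv_pencil E(1) that by blast
  then obtain BE where BE: "star_packing BE" "\<Union>BE = E"
    using star_decomposition_of_even_pencil[OF \<open>finite E\<close> E(2)] by blast
  have "v \<notin> set vs" using Cons.prems(1) by simp
  have EG: "E \<subseteq> G" using E(1) unfolding Gv_def by blast
  have "\<exists>B. star_packing B \<and> \<Union>B = G - E"
  proof (rule Cons.IH)
    show "\<forall>e\<in>G - E. e \<inter> set vs \<noteq> {}"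
      using E(3) Cons.prems(4) by (fastforce simp: Gv_def)
    show "later_adjacent (G - E) vs"
    proof (rule later_adjacent_mono)
      show "later_adjacent G vs" using Cons.prems(5) by simp
      show "{x, y} \<in> G - E" if "x \<in> set vs" "y \<in> set vs" "{x, y} \<in> G" for x y
        using that E(1) \<open>v \<notin> set vs\<close> by (auto simp: Gv_def)
    qed
    show "even (card (G - E))"
      using EG E(2) Cons.prems(2,6) by (simp add: card_Diff_subset finite_subset)
  qed (use Cons.prems in \<open>auto intro: finite_subset\<close>)
  then obtain B where B: "star_packing B" "\<Union>B = G - E" by blast
  have "star_packing (BE \<union> B)" using BE B by (intro star_packing_union) auto
  moreover have "\<Union>(BE \<union> B) = G" using BE B EG by auto
  ultimately show ?case by blast
qed

lemma later_adjacent_order_exists: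
  assumes "finite W" and "W \<noteq> {}"
    and crossing: "\<And>S. S \<noteq> {} \<Longrightarrow> S \<subset> W \<Longrightarrow> \<exists>s\<in>S. \<exists>u\<in>W - S. {u, s} \<in> G"
  shows "\<exists>vs. distinct vs \<and> set vs = W \<and> later_adjacent G vs"
proof -
  have extend: "\<exists>ws. distinct ws \<and> set ws = W \<and> later_adjacent G ws"
    if "vs \<noteq> []" "distinct vs" "set vs \<subseteq> W" "later_adjacent G vs" for vs
    using that
  proof (induction "card (W - set vs)" arbitrary: vs rule: less_induct)
    case less
    show ?case
    proof (cases "set vs = W")
      case True
      with less.prems show ?thesis by blast
    next
      case False
      then obtain s u where su: "s \<in> set vs" "u \<in> W - set vs" "{u, s} \<in> G"
        using crossing[of "set vs"] less.prems by auto
      have "card (W - set (u # vs)) < card (W - set vs)"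
        using su(2) \<open>finite W\<close> by (intro psubset_card_mono) auto
      moreover have "later_adjacent G (u # vs)"
        using su less.prems(4) by auto
      ultimately show ?thesis
        using less.hyps[of "u # vs"] less.prems su(2) by auto
    qed
  qed
  obtain r where "r \<in> W" using \<open>W \<noteq> {}\<close> by blast
  then show ?thesis by (intro extend[of "[r]"]) auto
qed

text \<open>The vertex set of a graph given by its edge set \<open>G\<close> is taken to be \<open>\<Union>G\<close>.\<close>

definition connected_graph :: "'a set set \<Rightarrow> bool" where
  "connected_graph G \<longleftrightarrow>
     (\<forall>S. S \<noteq> {} \<longrightarrow> S \<subset> \<Union>G \<longrightarrow> (\<exists>s\<in>S. \<exists>u\<in>\<Union>G - S. {u, s} \<in> G))"

lemma star_decomposition_of_connected_even_graph:
  assumes "finite G" and "G \<subseteq> complete_edges V"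
    and "connected_graph G" and "even (card G)"
  shows "\<exists>B. star_packing B \<and> \<Union>B = G"
proof (cases "G = {}")
  case True
  then show ?thesis by (intro exI[of _ "{}"]) simp
next
  case False
  have "finite (\<Union>G)" and "\<Union>G \<noteq> {}"
    using assms(1,2) False by (fastforce simp: complete_edges_def)+
  then obtain vs where vs: "distinct vs" "set vs = \<Union>G" "later_adjacent G vs"
    using later_adjacent_order_exists[of "\<Union>G" G] assms(3)
    by (auto simp: connected_graph_def)
  have "\<forall>e\<in>G. e \<inter> set vs \<noteq> {}"
  proof
    fix e assume "e \<in> G"
    then have "e \<noteq> {}" using assms(2) by (auto simp: complete_edges_def)
    with \<open>e \<in> G\<close> vs(2) show "e \<inter> set vs \<noteq> {}" by blast
  qed
  then show ?thesis
    using star_decomposition_along_later_adjacent[OF vs(1) assms(1,2) _ vs(3) assms(4)] by blast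
qed

lemma card_cut_edges:
  assumes "finite S" and "finite T" and "S \<inter> T = {}"
  shows "card ((\<lambda>(s, t). {s, t}) ` (S \<times> T)) = card S * card T"
proof -
  have "inj_on (\<lambda>(s, t). {s, t}) (S \<times> T)"
    using assms(3) by (auto simp: inj_on_def doubleton_eq_iff)
  then show ?thesis
    using assms(1,2) by (simp add: card_image card_cartesian_product)
qed

lemma cut_crossed_by_complete_edges_Diff:
  assumes "finite V" and "M \<subseteq> complete_edges V" and "card M + 4 < 2 * card V"
    and "S \<subseteq> V" and "2 \<le> card S" and "2 \<le> card (V - S)"
  shows "\<exists>s\<in>S. \<exists>u\<in>V - S. {u, s} \<in> complete_edges V - M"
proof -
  let ?C = "(\<lambda>(s, u). {s, u}) ` (S \<times> (V - S))"
  have "finite S" using assms(1,4) finite_subset by blast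
  obtain a b where ab: "card S = a + 2" "card (V - S) = b + 2"
    using assms(5,6) by (metis add.commute le_Suc_ex)
  have "card ?C = card S * card (V - S)"
    using assms(1) \<open>finite S\<close> by (intro card_cut_edges) auto
  moreover have "card V = card S + card (V - S)"
    using assms(1,4) \<open>finite S\<close> by (simp add: card_Diff_subset card_mono)
  ultimately have "card M < card ?C"
    using assms(3) ab by (simp add: algebra_simps)
  moreover have "finite M"
    using assms(1,2) finite_complete_edges finite_subset by blast
  ultimately have "\<not> ?C \<subseteq> M"
    using card_mono leD by blast
  then obtain s u where su: "s \<in> S" "u \<in> V - S" "{s, u} \<notin> M" by auto
  then have "{u, s} \<in> complete_edges V"
    using assms(4) unfolding complete_edges_def by blast
  with su show ?thesis by (auto simp: insert_commute)
qed

lemma vertex_has_neighbour: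
  assumes "G \<subseteq> complete_edges V" and "x \<in> \<Union>G"
  shows "\<exists>y. y \<noteq> x \<and> {x, y} \<in> G"
proof -
  obtain a b where "a \<noteq> b" "{a, b} \<in> G" "x \<in> {a, b}"
    using assms unfolding complete_edges_def by blast
  then show ?thesis by (metis insert_commute insertE singletonD)
qed

lemma connected_complete_edges_Diff:
  assumes "finite V" and "M \<subseteq> complete_edges V" and "card M + 4 < 2 * card V"
  shows "connected_graph (complete_edges V - M)"
  unfolding connected_graph_def
proof (intro allI impI)
  let ?G = "complete_edges V - M"
  have GV: "\<Union>?G \<subseteq> V" by (auto simp: complete_edges_def)
  fix S assume S: "S \<noteq> {}" "S \<subset> \<Union>?G"
  show "\<exists>s\<in>S. \<exists>u\<in>\<Union>?G - S. {u, s} \<in> ?G"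
  proof (rule ccontr)
    assume no_crossing: "\<not> ?thesis"
    have two_le_card: "2 \<le> card X"
      if X: "X \<noteq> {}" "X \<subseteq> \<Union>?G" "\<And>x y. x \<in> X \<Longrightarrow> {x, y} \<in> ?G \<Longrightarrow> y \<in> X" for X
    proof -
      obtain x where "x \<in> X" using X(1) by blast
      then obtain y where "y \<noteq> x" "{x, y} \<in> ?G"
        using X(2) vertex_has_neighbour[of ?G V x] by blast
      moreover have "finite X"
        using finite_subset[OF order_trans[OF X(2) GV] assms(1)] .
      ultimately have "\<not> card X \<le> Suc 0"
        using \<open>x \<in> X\<close> X(3) by (subst card_le_Suc0_iff_eq) auto
      then show ?thesis by simp
    qed
    have "2 \<le> card S"
    proof (rule two_le_card)
      show "S \<noteq> {}" and "S \<subseteq> \<Union>?G" using S by auto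
      show "y \<in> S" if "x \<in> S" "{x, y} \<in> ?G" for x y
      proof (rule ccontr)
        assume "y \<notin> S"
        with that have "y \<in> \<Union>?G - S" "{y, x} \<in> ?G" by (auto simp: insert_commute)
        with no_crossing \<open>x \<in> S\<close> show False by blast
      qed
    qed
    moreover have "2 \<le> card (V - S)"
    proof -
      have "2 \<le> card (\<Union>?G - S)"
      proof (rule two_le_card)
        show "\<Union>?G - S \<noteq> {}" and "\<Union>?G - S \<subseteq> \<Union>?G" using S(2) by auto
        show "y \<in> \<Union>?G - S" if "x \<in> \<Union>?G - S" "{x, y} \<in> ?G" for x y
          using that no_crossing by blast
      qed
      also have "\<dots> \<le> card (V - S)"
        using GV assms(1) by (intro card_mono) auto
      finally show ?thesis .
    qed
    moreover have "S \<subseteq> V" using S(2) GV by blast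
    ultimately obtain s u where "s \<in> S" "u \<in> V - S" "{u, s} \<in> ?G"
      using cut_crossed_by_complete_edges_Diff[OF assms] by blast
    then have "u \<in> \<Union>?G - S" by blast
    with no_crossing \<open>s \<in> S\<close> \<open>{u, s} \<in> ?G\<close> show False by blast
  qed
qed

theorem lemma6:
  fixes V :: "'a set" and A :: "'a set set set" and n :: nat
  assumes "two_admissible n" and "n > 1"
    and "partial_2star_design V A" and "card V = n"
    and "card A = n - 3"
  shows "completable V A"
proof -
  have "finite V" and packing_A: "star_packing A" and A_edges: "\<Union>A \<subseteq> complete_edges V"
    using assms(3) by (auto simp: partial_2star_design_def edge_disjoint_stars_iff)
  have "n \<ge> 4"
    using assms(1,2) by (cases "n = 2 \<or> n = 3") (auto simp: two_admissible_def choose_two)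
  have "finite (\<Union>A)"
    using A_edges \<open>finite V\<close> finite_complete_edges finite_subset by blast
  then have card_A_edges: "card (\<Union>A) = 2 * (n - 3)"
    using card_Union_star_packing[OF packing_A] assms(5) by simp
  define G where "G = complete_edges V - \<Union>A"
  have "connected_graph G"
    unfolding G_def using \<open>finite V\<close> A_edges card_A_edges assms(4) \<open>n \<ge> 4\<close>
    by (intro connected_complete_edges_Diff) auto
  moreover have "even (card G)"
    unfolding G_def using assms(1,4) \<open>finite V\<close> card_A_edges A_edges \<open>finite (\<Union>A)\<close>
    by (simp add: two_admissible_def card_complete_edges card_Diff_subset)
  ultimately obtain B where "star_packing B" and "\<Union>B = G"
    using star_decomposition_of_connected_even_graph[of G V] \<open>finite V\<close>
    by (auto simp: G_def finite_complete_edges)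
  then show ?thesis
    unfolding completable_def using packing_A A_edges
    by (intro exI[of _ "A \<union> B"]) (auto simp: edge_disjoint_stars_iff G_def intro: star_packing_union)
qed

end
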